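(* Let $A=R/I$ be a graded Artinian Gorenstein algebra of socle degree $j$ with $I_2=\langle w^2,wx,wy\rangle$, and let $F=G+WZ^{[j-1]}$, $G\in K_{DP}[X,Y,Z]_j$, be a dual generator of $I$. Let $J=\mathrm{Ann}_R(G)$, $J'=J\cap K[x,y,z]$, $R'=K[x,y,z]$ and $\alpha=\alpha(J)$. Then either $H(R/I)=H(R'/J')+H_\alpha$ or $H(R/I)=H(R'/J')+H_0$, and the second possibility can occur only if $\alpha\ge j/2$.
   Context: $K$ algebraically closed, $R=K[w,x,y,z]$, divided power algebra $\mathcal D=K_{DP}[W,X,Y,Z]$ with contraction action of $R$; $I=\mathrm{Ann}(F)$. $\alpha(J)=\min\{\alpha\ge1: J'_\alpha\not\subset(x,y)R'\}$. For $2\le\alpha\le j$ define the sequence $H_\alpha=(h_0,\dots,h_j)$ by $h_0=h_j=0$ and: if $\alpha\le j/2$, $h_i=1$ for $1\le i\le\alpha-1$, $h_i=2$ for $\alpha\le i\le j-\alpha$, $h_i=1$ for $j-\alpha<i\le j-1$; if $\alpha>j/2$, $h_i=1$ for $1\le i\le j-\alpha$, $h_i=0$ for $j-\alpha<i<\alpha$, $h_i=1$ for $\alpha\le i\le j-1$. Also $H_0=(0,1,1,\dots,1,0)$ (length $j+1$). Hilbert functions are added termwise. *)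

theory Defs
  imports "HOL-Computational_Algebra.Polynomial" "HOL-Library.Function_Algebras"
begin

(* Variables w,x,y,z of R = K[w,x,y,z]; the divided-power variables W,X,Y,Z of D
   are indexed by the same datatype. *)
datatype var = vw | vx | vy | vz

type_synonym mono = "var \<Rightarrow> nat"

(* a polynomial (element of R) or a divided power polynomial (element of D)
   is given by its coefficient function on exponent vectors *)
type_synonym 'a pol = "mono \<Rightarrow> 'a"

definition mdeg :: "mono \<Rightarrow> nat" where
  "mdeg m = m vw + m vx + m vy + m vz"

definition madd :: "mono \<Rightarrow> mono \<Rightarrow> mono" where
  "madd a b = (\<lambda>v. a v + b v)"

definition mle :: "mono \<Rightarrow> mono \<Rightarrow> bool" where
  "mle a b = (\<forall>v. a v \<le> b v)"

definition msub :: "mono \<Rightarrow> mono \<Rightarrow> mono" where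
  "msub a b = (\<lambda>v. a v - b v)"

definition supp :: "('a::zero) pol \<Rightarrow> mono set" where
  "supp f = {m. f m \<noteq> 0}"

definition polys :: "('a::zero) pol set" where
  "polys = {f. finite (supp f)}"

definition monom1 :: "mono \<Rightarrow> ('a::{zero,one}) pol" where
  "monom1 e = (\<lambda>m. if m = e then 1 else 0)"

definition expv :: "nat \<Rightarrow> nat \<Rightarrow> nat \<Rightarrow> nat \<Rightarrow> mono" where
  "expv a b c d = (\<lambda>v. case v of vw \<Rightarrow> a | vx \<Rightarrow> b | vy \<Rightarrow> c | vz \<Rightarrow> d)"

definition homog :: "nat \<Rightarrow> ('a::zero) pol \<Rightarrow> bool" where
  "homog d f = (\<forall>m. f m \<noteq> 0 \<longrightarrow> mdeg m = d)"

definition no_w :: "('a::zero) pol \<Rightarrow> bool" where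
  "no_w f = (\<forall>m. f m \<noteq> 0 \<longrightarrow> m vw = 0)"

definition polys' :: "('a::zero) pol set" where
  "polys' = {f \<in> polys. no_w f}"

definition pmul :: "('a::comm_ring_1) pol \<Rightarrow> 'a pol \<Rightarrow> 'a pol" where
  "pmul f g = (\<lambda>m. \<Sum>a\<in>{a. mle a m}. f a * g (msub m a))"

(* contraction action of R on D:  x^a o X^[b] = X^[b-a] if a \<le> b, else 0 *)
definition contract :: "('a::comm_ring_1) pol \<Rightarrow> 'a pol \<Rightarrow> 'a pol" where
  "contract f F = (\<lambda>c. \<Sum>m\<in>supp f. f m * F (madd m c))"

definition Ann :: "('a::comm_ring_1) pol \<Rightarrow> 'a pol set" where
  "Ann F = {f \<in> polys. contract f F = (\<lambda>_. 0)}"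

definition pscale :: "'a::comm_ring_1 \<Rightarrow> 'a pol \<Rightarrow> 'a pol" where
  "pscale c f = (\<lambda>m. c * f m)"

definition hilb :: "('a::field) pol set \<Rightarrow> 'a pol set \<Rightarrow> nat \<Rightarrow> nat" where
  "hilb S Q i = vector_space.dim pscale {f \<in> S. homog i f}
              - vector_space.dim pscale {f \<in> Q \<inter> S. homog i f}"

definition xyR' :: "('a::comm_ring_1) pol set" where
  "xyR' = {\<lambda>m. pmul (monom1 (expv 0 1 0 0)) g m + pmul (monom1 (expv 0 0 1 0)) h m
           | g h. g \<in> polys' \<and> h \<in> polys'}"

definition alpha_inv :: "('a::comm_ring_1) pol set \<Rightarrow> nat" where
  "alpha_inv J' = (LEAST a. a \<ge> 1 \<and> (\<exists>f\<in>J'. homog a f \<and> f \<notin> xyR'))"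

(* the sequences H_\<alpha> (2 \<le> \<alpha> \<le> j) of length j+1, extended by 0 beyond index j *)
definition Hseq :: "nat \<Rightarrow> nat \<Rightarrow> nat \<Rightarrow> nat" where
  "Hseq j a i =
    (if i = 0 \<or> i \<ge> j then 0
     else if 2 * a \<le> j then (if i \<le> a - 1 then 1 else if i \<le> j - a then 2 else 1)
     else (if i \<le> j - a then 1 else if i < a then 0 else 1))"

definition H0seq :: "nat \<Rightarrow> nat \<Rightarrow> nat" where
  "H0seq j i = (if i = 0 \<or> i \<ge> j then 0 else 1)"

end

theory Submission
  imports Defs
begin

text \<open>
  The Hilbert function of \<open>R/Ann(\<Phi>)\<close> in degree \<open>i\<close> is the rank of the catalecticant matrix
  \<open>(\<Phi>(m + c))\<close>, whose rows are the contractions of \<open>\<Phi>\<close> by the monomials of degree \<open>i\<close>; since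
  row rank equals column rank, it is symmetric about \<open>j/2\<close>.

  Let \<open>1 \<le> i \<le> j - 1\<close>. Monomials involving \<open>w\<close> contract \<open>F = G + W Z\<^sup>[\<^sup>j\<^sup>-\<^sup>1\<^sup>]\<close> to \<open>0\<close> or to
  \<open>Z\<^sup>[\<^sup>j\<^sup>-\<^sup>i\<^sup>]\<close>, while a form \<open>g\<close> of \<open>R'\<close> contracts it to \<open>g \<circ> G + g(z\<^sup>i) W Z\<^sup>[\<^sup>j\<^sup>-\<^sup>1\<^sup>-\<^sup>i\<^sup>]\<close>.
  Discarding the \<open>W\<close>-part gives
  \<open>H(R/I)\<^sub>i = H(R'/J')\<^sub>i + [J'\<^sub>i \<notin> (x,y)] + [Z\<^sup>[\<^sup>j\<^sup>-\<^sup>i\<^sup>] \<notin> (x,y)\<^sub>i \<circ> G]\<close>.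
  The first indicator is \<open>[\<alpha> \<le> i]\<close>. The second is downward closed in \<open>i\<close> and holds at
  \<open>i = j - \<alpha>\<close>, because an element of \<open>J'\<^sub>\<alpha>\<close> with nonzero \<open>z\<^sup>\<alpha>\<close>-coefficient kills \<open>G\<close> but
  not \<open>Z\<^sup>[\<^sup>\<alpha>\<^sup>]\<close>. Symmetry of both Hilbert functions then leaves only the shapes \<open>H\<^sub>\<alpha>\<close> and
  \<open>H\<^sub>0\<close> for the difference. The hypothesis on \<open>I\<^sub>2\<close> is used only through \<open>(I \<inter> R')\<^sub>2 = 0\<close>,
  which forces \<open>2 \<le> \<alpha> \<le> j\<close>.
\<close>

section \<open>Linear algebra\<close>

interpretation pvs: vector_space "pscale :: 'a::field \<Rightarrow> 'a pol \<Rightarrow> 'a pol"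
  by unfold_locales (auto simp: pscale_def fun_eq_iff algebra_simps)

context vector_space
begin

lemma dim_insert_finite_span:
  assumes "S \<subseteq> span W" "finite W"
  shows "dim (insert x S) = (if x \<in> span S then dim S else dim S + 1)"
proof (cases "x \<in> span S")
  case True
  then show ?thesis
    by (metis dim_span span_redundant)
next
  case False
  obtain B where B: "B \<subseteq> span S" "independent B" "span S \<subseteq> span B" "card B = dim (span S)"
    using basis_exists [of "span S"] by blast
  have "finite B"
    using independent_span_bound[OF assms(2) B(2)] B(1) assms(1)
    by (meson span_minimal subspace_span subset_trans)
  have "dim (span (insert x S)) = Suc (dim S)"
  proof (rule dim_unique)
    show "insert x B \<subseteq> span (insert x S)"
      by (meson B(1) insertI1 insert_subset order_trans span_base span_mono subset_insertI)
    show "span (insert x S) \<subseteq> span (insert x B)"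
      by (metis B(1,3) span_breakdown_eq span_subspace subsetI subspace_span)
    show "independent (insert x B)"
      by (metis B(1-3) independent_insert span_subspace subspace_span False)
    show "card (insert x B) = Suc (dim S)"
      using B False \<open>finite B\<close> by (metis card_insert_disjoint dim_span span_base subsetD)
  qed
  then show ?thesis
    by (metis False Suc_eq_plus1 dim_span)
qed

lemma kernel_complement_no_collision:
  fixes L :: "'b \<Rightarrow> 'b"
  assumes L: "\<And>x y. L (x + y) = L x + L y"
    and V: "subspace V" and B: "B \<subseteq> V" "independent B" and B0: "B0 \<subseteq> B"
    and ker: "{x\<in>V. L x = 0} \<subseteq> span B0"
    and c: "c \<in> B - B0" and y: "y \<in> span (B - B0 - {c})"
  shows "L c \<noteq> L y"
proof
  assume eq: "L c = L y"
  have "span (B - B0 - {c}) \<subseteq> V"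
    using B(1) V by (intro span_minimal) auto
  then have "c - y \<in> V"
    using c y B(1) V by (blast intro: subspace_diff)
  moreover have "L (c - y) = L c - L y"
    using L[of "c - y" y] by simp
  then have "L (c - y) = 0"
    using eq by simp
  ultimately have "c - y \<in> span (B - {c})"
    using ker c B0 span_mono[of B0 "B - {c}"] by blast
  moreover have "y \<in> span (B - {c})"
    using y span_mono[of "B - B0 - {c}" "B - {c}"] by blast
  ultimately have "c \<in> span (B - {c})"
    using span_add by fastforce
  then show False
    using B(2) c unfolding dependent_def by blast
qed

lemma independent_image_of_kernel_complement:
  assumes L: "\<And>x y. L (x + y) = L x + L y" "\<And>c x. L (scale c x) = scale c (L x)"
    and V: "subspace V" and B: "B \<subseteq> V" "independent B" and B0: "B0 \<subseteq> B"
    and ker: "{x\<in>V. L x = 0} \<subseteq> span B0"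
  shows "inj_on L (B - B0)" and "independent (L ` (B - B0))"
proof -
  let ?C = "B - B0"
  note no_collision = kernel_complement_no_collision[OF L(1) V B B0 ker]
  show inj: "inj_on L ?C"
  proof (rule inj_onI, rule ccontr)
    fix a b
    assume "a \<in> ?C" "b \<in> ?C" "L a = L b" "a \<noteq> b"
    then show False
      using no_collision[of a b] by (simp add: span_base)
  qed
  have "module_hom scale scale L"
    using L by (simp add: module_hom_iff module_axioms)
  then have span_L: "L ` span X = span (L ` X)" for X
    by (simp add: module_hom.span_image)
  show "independent (L ` ?C)"
  proof
    assume "dependent (L ` ?C)"
    then obtain c where c: "c \<in> ?C" and "L c \<in> span (L ` ?C - {L c})"
      unfolding dependent_def by blast
    moreover have "L ` ?C - {L c} = L ` (?C - {c})"
      using inj c by (auto simp: inj_on_def)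
    ultimately obtain y where "y \<in> span (?C - {c})" "L c = L y"
      using span_L by (metis imageE)
    then show False
      using no_collision c by blast
  qed
qed

lemma dim_eq_dim_kernel_plus_dim_image:
  assumes L: "\<And>x y. L (x + y) = L x + L y" "\<And>c x. L (scale c x) = scale c (L x)"
    and V: "subspace V" "V \<subseteq> span W" "finite W"
  shows "dim V = dim {x\<in>V. L x = 0} + dim (L ` V)"
proof -
  let ?K = "{x\<in>V. L x = 0}"
  obtain B0 where B0: "B0 \<subseteq> ?K" "independent B0" "?K \<subseteq> span B0"
    using maximal_independent_subset[of ?K] by blast
  obtain B where B: "B0 \<subseteq> B" "B \<subseteq> V" "independent B" "V \<subseteq> span B"
    using maximal_independent_subset_extend[of B0 V] B0 by blast
  have "finite B"
    using independent_span_bound[OF V(3) B(3)] B(2) V(2) by blast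
  note complement = independent_image_of_kernel_complement[OF L V(1) B(2,3,1) B0(3)]
  have "module_hom scale scale L"
    using L by (simp add: module_hom_iff module_axioms)
  then have "L ` V \<subseteq> span (L ` B)"
    using B(4) by (metis image_mono module_hom.span_image)
  also have "L ` B \<subseteq> insert 0 (L ` (B - B0))"
    using B0(1) by auto
  finally have "L ` V \<subseteq> span (L ` (B - B0))"
    by (metis span_insert_0 span_mono)
  moreover have "L ` (B - B0) \<subseteq> L ` V"
    using B(2) by blast
  ultimately have "dim (L ` V) = card (L ` (B - B0))"
    using basis_card_eq_dim complement(2) by metis
  also have "\<dots> = card B - card B0"
    using card_image[OF complement(1)] B(1) \<open>finite B\<close> by (metis card_Diff_subset finite_subset)
  finally have "dim (L ` V) = card B - card B0" .
  moreover have "card B0 \<le> card B"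
    using B(1) \<open>finite B\<close> by (simp add: card_mono)
  ultimately show ?thesis
    using basis_card_eq_dim[OF B0(1,3,2)] basis_card_eq_dim[OF B(2,4,3)] by linarith
qed

lemma dim_image_functional_scale:
  assumes K: "subspace K"
    and \<phi>: "\<And>x y. \<phi> (x + y) = \<phi> x + \<phi> y" "\<And>c x. \<phi> (scale c x) = c * \<phi> x"
    and "e \<noteq> 0"
  shows "dim ((\<lambda>x. scale (\<phi> x) e) ` K) = (if \<exists>x\<in>K. \<phi> x \<noteq> 0 then 1 else 0)"
proof (cases "\<exists>x\<in>K. \<phi> x \<noteq> 0")
  case True
  then obtain x0 where x0: "x0 \<in> K" "\<phi> x0 \<noteq> 0"
    by blast
  have "(\<lambda>x. scale (\<phi> x) e) ` K = range (\<lambda>c. scale c e)"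
  proof (intro equalityI subsetI)
    fix v
    assume "v \<in> range (\<lambda>c. scale c e)"
    then obtain c where "v = scale c e"
      by blast
    moreover have "scale (c / \<phi> x0) x0 \<in> K"
      using K x0(1) by (rule subspace_scale)
    moreover have "\<phi> (scale (c / \<phi> x0) x0) = c"
      using x0(2) by (simp add: \<phi>(2))
    ultimately show "v \<in> (\<lambda>x. scale (\<phi> x) e) ` K"
      by (metis image_eqI)
  qed auto
  also have "\<dots> = span {e}"
    by (auto simp: span_singleton)
  finally show ?thesis
    using True dim_eq_card_independent[of "{e}"] \<open>e \<noteq> 0\<close> by simp
next
  case False
  then have "(\<lambda>x. scale (\<phi> x) e) ` K = {0}"
    using subspace_0[OF K] by force
  then show ?thesis
    using False dim_le_card[of "{0}" "{}"] by (simp add: span_empty)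
qed

end

section \<open>Monomials and homogeneous components\<close>

lemma pscale_apply [simp]: "pscale a f c = a * f c"
  by (simp add: pscale_def)

lemma sum_fun_apply: "(\<Sum>x\<in>A. f x) c = (\<Sum>x\<in>A. (f x :: 'b \<Rightarrow> 'c::comm_monoid_add) c)"
  by (induction A rule: infinite_finite_induct) auto

lemma all_var: "(\<forall>v. P v) \<longleftrightarrow> P vw \<and> P vx \<and> P vy \<and> P vz"
  by (metis var.exhaust)

lemma mono_eq_iff: "m = m' \<longleftrightarrow> m vw = m' vw \<and> m vx = m' vx \<and> m vy = m' vy \<and> m vz = m' vz"
  unfolding fun_eq_iff all_var ..

lemma mle_iff: "mle a b \<longleftrightarrow> a vw \<le> b vw \<and> a vx \<le> b vx \<and> a vy \<le> b vy \<and> a vz \<le> b vz"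
  unfolding mle_def all_var ..

lemma madd_apply [simp]: "madd a b v = a v + b v"
  by (simp add: madd_def)

lemma msub_apply [simp]: "msub a b v = a v - b v"
  by (simp add: msub_def)

lemma expv_apply [simp]:
  "expv a b c d vw = a" "expv a b c d vx = b" "expv a b c d vy = c" "expv a b c d vz = d"
  by (simp_all add: expv_def)

lemma mdeg_madd [simp]: "mdeg (madd a b) = mdeg a + mdeg b"
  by (simp add: mdeg_def)

lemma mdeg_expv [simp]: "mdeg (expv a b c d) = a + b + c + d"
  by (simp add: mdeg_def)

lemma mdeg_eq_0_iff: "mdeg m = 0 \<longleftrightarrow> m = (\<lambda>_. 0)"
  by (auto simp: mdeg_def mono_eq_iff)

lemma madd_0 [simp]: "madd (\<lambda>_. 0) c = c"
  by (simp add: madd_def)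

lemma madd_0_right [simp]: "madd c (\<lambda>_. 0) = c"
  by (simp add: madd_def)

lemma madd_commute: "madd a b = madd b a"
  by (simp add: madd_def add.commute)

lemma madd_left_commute: "madd a (madd b c) = madd b (madd a c)"
  by (simp add: madd_def fun_eq_iff ac_simps)

lemma supp_monom1 [simp]: "supp (monom1 e :: 'a::zero_neq_one pol) = {e}"
  by (auto simp: supp_def monom1_def)

text \<open>The flag selects \<open>R' = K[x,y,z]\<close> (\<open>True\<close>) or \<open>R = K[w,x,y,z]\<close> (\<open>False\<close>).\<close>

definition monoms :: "bool \<Rightarrow> nat \<Rightarrow> mono set" where
  "monoms wfree i = {m. mdeg m = i \<and> (wfree \<longrightarrow> m vw = 0)}"

definition hpart :: "bool \<Rightarrow> nat \<Rightarrow> ('a::zero) pol set" where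
  "hpart wfree i = {f. finite (supp f) \<and> homog i f \<and> (wfree \<longrightarrow> no_w f)}"

definition base_ring :: "bool \<Rightarrow> ('a::zero) pol set" where
  "base_ring wfree = (if wfree then polys' else polys)"

lemma hpart_eq: "{f \<in> base_ring wfree. homog i f} = hpart wfree i"
  by (auto simp: base_ring_def hpart_def polys'_def polys_def)

lemma finite_monoms: "finite (monoms wfree i)"
proof -
  have "monoms wfree i \<subseteq> (\<lambda>(a, b, c, d). expv a b c d) ` ({0..i} \<times> {0..i} \<times> {0..i} \<times> {0..i})"
  proof
    fix m
    assume "m \<in> monoms wfree i"
    then have "m vw \<le> i" "m vx \<le> i" "m vy \<le> i" "m vz \<le> i"
      by (auto simp: monoms_def mdeg_def)
    then show "m \<in> (\<lambda>(a, b, c, d). expv a b c d) ` ({0..i} \<times> {0..i} \<times> {0..i} \<times> {0..i})"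
      by (intro image_eqI[of _ _ "(m vw, m vx, m vy, m vz)"]) (auto simp: mono_eq_iff)
  qed
  then show ?thesis
    by (rule finite_subset) auto
qed

lemma supp_subset_monoms: "f \<in> hpart wfree i \<Longrightarrow> supp f \<subseteq> monoms wfree i"
  by (auto simp: hpart_def supp_def monoms_def homog_def no_w_def)

lemma subspace_hpart: "pvs.subspace (hpart wfree i :: 'a::field pol set)"
  unfolding pvs.subspace_def
proof (intro conjI ballI allI)
  show "0 \<in> (hpart wfree i :: 'a pol set)"
    by (simp add: hpart_def supp_def homog_def no_w_def)
next
  fix f g :: "'a pol"
  assume f: "f \<in> hpart wfree i" and g: "g \<in> hpart wfree i"
  have nonzero: "f m \<noteq> 0 \<or> g m \<noteq> 0" if "(f + g) m \<noteq> 0" for m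
    using that by auto
  have "supp (f + g) \<subseteq> supp f \<union> supp g"
    using nonzero by (auto simp: supp_def)
  then have "finite (supp (f + g))"
    using f g by (auto simp: hpart_def intro: finite_subset)
  moreover have "homog i (f + g)" "wfree \<longrightarrow> no_w (f + g)"
    using f g nonzero by (auto simp: hpart_def homog_def no_w_def) blast+
  ultimately show "f + g \<in> hpart wfree i"
    by (simp add: hpart_def)
next
  fix c :: 'a and f :: "'a pol"
  assume "f \<in> hpart wfree i"
  moreover have "supp (pscale c f) \<subseteq> supp f"
    by (auto simp: supp_def)
  ultimately show "pscale c f \<in> hpart wfree i"
    by (auto simp: hpart_def homog_def no_w_def intro: finite_subset)
qed

lemma monom1_in_hpart:
  assumes "m \<in> monoms wfree i"
  shows "(monom1 m :: 'a::field pol) \<in> hpart wfree i"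
proof -
  have "finite (supp (monom1 m :: 'a pol))"
    by simp
  then show ?thesis
    using assms by (auto simp: hpart_def homog_def no_w_def monom1_def monoms_def)
qed

lemma hpart_eq_span_monom1: "hpart wfree i = pvs.span (monom1 ` monoms wfree i :: 'a::field pol set)"
proof
  show "hpart wfree i \<subseteq> pvs.span (monom1 ` monoms wfree i :: 'a pol set)"
  proof
    fix f :: "'a pol"
    assume f: "f \<in> hpart wfree i"
    have "f = (\<Sum>m\<in>monoms wfree i. pscale (f m) (monom1 m))"
    proof
      fix c
      have "(\<Sum>m\<in>monoms wfree i. pscale (f m) (monom1 m :: 'a pol)) c
          = (\<Sum>m\<in>monoms wfree i. if m = c then f m else 0)"
        unfolding sum_fun_apply by (intro sum.cong refl) (auto simp: monom1_def)
      also have "\<dots> = f c"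
        using supp_subset_monoms[OF f] finite_monoms by (auto simp: supp_def)
      finally show "f c = (\<Sum>m\<in>monoms wfree i. pscale (f m) (monom1 m)) c" ..
    qed
    also have "\<dots> \<in> pvs.span (monom1 ` monoms wfree i)"
      by (intro pvs.span_sum pvs.span_scale pvs.span_base) auto
    finally show "f \<in> pvs.span (monom1 ` monoms wfree i)" .
  qed
next
  show "pvs.span (monom1 ` monoms wfree i :: 'a pol set) \<subseteq> hpart wfree i"
    using subspace_hpart monom1_in_hpart by (intro pvs.span_minimal) auto
qed

section \<open>Hilbert functions as ranks of catalecticants\<close>

text \<open>Unlike \<^const>\<open>contract\<close>, this is linear in \<open>f\<close> without any finiteness condition;
  the two agree on polynomials supported in \<open>M\<close>.\<close>

definition contract_on :: "mono set \<Rightarrow> ('a::comm_ring_1) pol \<Rightarrow> 'a pol \<Rightarrow> 'a pol" where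
  "contract_on M \<Phi> f = (\<lambda>c. \<Sum>m\<in>M. f m * \<Phi> (madd m c))"

lemma contract_on_add: "contract_on M \<Phi> (f + g) = contract_on M \<Phi> f + contract_on M \<Phi> g"
  by (auto simp: contract_on_def fun_eq_iff algebra_simps sum.distrib)

lemma contract_on_scale: "contract_on M \<Phi> (pscale a f) = pscale a (contract_on M \<Phi> f)"
  by (auto simp: contract_on_def fun_eq_iff algebra_simps sum_distrib_left)

lemma contract_eq_contract_on: "f \<in> hpart wfree i \<Longrightarrow> contract f \<Phi> = contract_on (monoms wfree i) \<Phi> f"
  unfolding contract_def contract_on_def
  by (rule ext, rule sum.mono_neutral_left[OF finite_monoms supp_subset_monoms]) (auto simp: supp_def)

lemma contract_on_monom1:
  assumes "m \<in> M" "finite M"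
  shows "contract_on M \<Phi> (monom1 m) = (\<lambda>c. \<Phi> (madd m c))"
proof
  fix c
  have "contract_on M \<Phi> (monom1 m) c = (\<Sum>n\<in>M. if n = m then \<Phi> (madd m c) else 0)"
    unfolding contract_on_def by (intro sum.cong refl) (auto simp: monom1_def)
  also have "\<dots> = \<Phi> (madd m c)"
    using assms by simp
  finally show "contract_on M \<Phi> (monom1 m) c = \<Phi> (madd m c)" .
qed

lemma contract_monom1: "contract (monom1 e :: 'a::comm_ring_1 pol) \<Phi> = (\<lambda>c. \<Phi> (madd e c))"
  unfolding contract_def supp_monom1 by (simp add: monom1_def)

definition partials :: "bool \<Rightarrow> nat \<Rightarrow> ('a::zero) pol \<Rightarrow> 'a pol set" where
  "partials wfree i \<Phi> = (\<lambda>m c. \<Phi> (madd m c)) ` monoms wfree i"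

lemma contract_on_image:
  "contract_on (monoms wfree i) \<Phi> ` hpart wfree i = pvs.span (partials wfree i \<Phi> :: 'a::field pol set)"
proof -
  have "module_hom pscale pscale (contract_on (monoms wfree i) \<Phi> :: 'a pol \<Rightarrow> 'a pol)"
    by (simp add: module_hom_iff pvs.module_axioms contract_on_add contract_on_scale)
  then have "contract_on (monoms wfree i) \<Phi> ` hpart wfree i
      = pvs.span (contract_on (monoms wfree i) \<Phi> ` monom1 ` monoms wfree i)"
    unfolding hpart_eq_span_monom1 by (simp add: module_hom.span_image)
  also have "contract_on (monoms wfree i) \<Phi> ` monom1 ` monoms wfree i = partials wfree i \<Phi>"
    unfolding partials_def image_image by (intro image_cong refl contract_on_monom1 finite_monoms)
  finally show ?thesis .
qed

lemma hilb_eq_dim_partials: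
  fixes \<Phi> :: "'a::field pol"
  assumes Q: "Q \<inter> base_ring wfree = Ann \<Phi> \<inter> base_ring wfree"
  shows "hilb (base_ring wfree) Q i = pvs.dim (partials wfree i \<Phi>)"
proof -
  let ?L = "contract_on (monoms wfree i) \<Phi>"
  have "base_ring wfree \<subseteq> (polys :: 'a pol set)"
    by (auto simp: base_ring_def polys'_def)
  then have "f \<in> Q \<inter> base_ring wfree \<longleftrightarrow> f \<in> base_ring wfree \<and> contract f \<Phi> = 0" for f
    using Q by (auto simp: Ann_def zero_fun_def)
  then have "{f \<in> Q \<inter> base_ring wfree. homog i f} = {f \<in> hpart wfree i. contract f \<Phi> = 0}"
    unfolding hpart_eq[symmetric] by blast
  also have "\<dots> = {f \<in> hpart wfree i. ?L f = 0}"
    by (intro Collect_cong) (auto simp: contract_eq_contract_on)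
  finally have ker: "{f \<in> Q \<inter> base_ring wfree. homog i f} = {f \<in> hpart wfree i. ?L f = 0}" .
  have "pvs.dim (hpart wfree i :: 'a pol set)
      = pvs.dim {f \<in> hpart wfree i. ?L f = 0} + pvs.dim (?L ` hpart wfree i)"
    by (rule pvs.dim_eq_dim_kernel_plus_dim_image[OF contract_on_add contract_on_scale subspace_hpart
          equalityD1[OF hpart_eq_span_monom1] finite_imageI[OF finite_monoms]])
  then show ?thesis
    unfolding hilb_def hpart_eq ker contract_on_image pvs.dim_span by simp
qed

lemma dim_rows_le_dim_columns:
  fixes P :: "mono \<Rightarrow> mono \<Rightarrow> 'a::field"
  assumes M: "finite M" and N: "finite N"
  shows "pvs.dim ((\<lambda>m c. if c \<in> N then P m c else 0) ` M)
       \<le> pvs.dim ((\<lambda>n c. if c \<in> M then P c n else 0) ` N)"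
proof -
  define col where "col n = (\<lambda>c. if c \<in> M then P c n else 0)" for n
  define row where "row m = (\<lambda>c. if c \<in> N then P m c else 0)" for m
  obtain B where B: "B \<subseteq> col ` N" "pvs.independent B" "col ` N \<subseteq> pvs.span B"
    using pvs.maximal_independent_subset[of "col ` N"] by blast
  have "finite B"
    using B(1) N finite_subset by blast
  have "\<exists>u. col n = (\<Sum>v\<in>B. pscale (u v) v)" if "n \<in> N" for n
    using that B(3) pvs.span_finite[OF \<open>finite B\<close>] by blast
  then obtain U where U: "\<And>n. n \<in> N \<Longrightarrow> col n = (\<Sum>v\<in>B. pscale (U n v) v)"
    by metis
  define R where "R v = (\<lambda>c. if c \<in> N then U c v else 0)" for v
  have "row m = (\<Sum>v\<in>B. pscale (v m) (R v))" if "m \<in> M" for m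
  proof
    fix c
    show "row m c = (\<Sum>v\<in>B. pscale (v m) (R v)) c"
    proof (cases "c \<in> N")
      case True
      have "row m c = col c m"
        using that True by (simp add: row_def col_def)
      also have "\<dots> = (\<Sum>v\<in>B. U c v * v m)"
        using U[OF True] by (simp add: sum_fun_apply)
      finally show ?thesis
        using True by (simp add: sum_fun_apply R_def mult.commute)
    qed (simp add: sum_fun_apply R_def row_def)
  qed
  then have "row ` M \<subseteq> pvs.span (R ` B)"
    by (auto intro!: pvs.span_sum pvs.span_scale intro: pvs.span_base)
  then have "pvs.dim (row ` M) \<le> card (R ` B)"
    using \<open>finite B\<close> by (intro pvs.dim_le_card) auto
  also have "\<dots> \<le> card B"
    using \<open>finite B\<close> card_image_le by blast
  also have "\<dots> = pvs.dim (col ` N)"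
    using pvs.basis_card_eq_dim[OF B(1,3,2)] .
  finally show ?thesis
    by (simp add: row_def col_def)
qed

lemma dim_partials_symmetric:
  fixes \<Phi> :: "'a::field pol"
  assumes \<Phi>: "homog j \<Phi>" "wfree \<longrightarrow> no_w \<Phi>" and "i \<le> j"
  shows "pvs.dim (partials wfree i \<Phi>) = pvs.dim (partials wfree (j - i) \<Phi>)"
proof -
  have truncate: "(\<lambda>m c. \<Phi> (madd m c)) ` monoms wfree k
      = (\<lambda>m c. if c \<in> monoms wfree (j - k) then \<Phi> (madd m c) else 0) ` monoms wfree k"
    if "k \<le> j" for k
  proof (intro image_cong refl ext)
    fix m c
    assume m: "m \<in> monoms wfree k"
    show "\<Phi> (madd m c) = (if c \<in> monoms wfree (j - k) then \<Phi> (madd m c) else 0)"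
    proof (cases "\<Phi> (madd m c) = 0")
      case False
      then have "mdeg (madd m c) = j" "wfree \<longrightarrow> madd m c vw = 0"
        using \<Phi> by (auto simp: homog_def no_w_def)
      then show ?thesis
        using m by (auto simp: monoms_def)
    qed simp
  qed
  have columns: "(\<lambda>n c. if c \<in> A then \<Phi> (madd c n) else 0) = (\<lambda>n c. if c \<in> A then \<Phi> (madd n c) else 0)"
    for A
    by (intro ext) (metis madd_commute)
  have "j - (j - i) = i"
    using \<open>i \<le> j\<close> by simp
  then show ?thesis
    using dim_rows_le_dim_columns[OF finite_monoms finite_monoms, where P = "\<lambda>m c. \<Phi> (madd m c)",
        of wfree i wfree "j - i"]
      dim_rows_le_dim_columns[OF finite_monoms finite_monoms, where P = "\<lambda>m c. \<Phi> (madd m c)",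
        of wfree "j - i" wfree i]
      truncate[of i] truncate[of "j - i"] \<open>i \<le> j\<close>
    unfolding partials_def columns by simp
qed

lemma dim_partials_0:
  fixes \<Phi> :: "'a::field pol"
  assumes "\<Phi> \<noteq> 0"
  shows "pvs.dim (partials wfree 0 \<Phi>) = 1"
proof -
  have "monoms wfree 0 = {\<lambda>_. 0}"
    by (auto simp: monoms_def mdeg_eq_0_iff)
  then have "partials wfree 0 \<Phi> = {\<Phi>}"
    by (simp add: partials_def)
  then show ?thesis
    using pvs.dim_eq_card_independent[of "{\<Phi>}"] pvs.dependent_single[of \<Phi>] assms by simp
qed

lemma dim_partials_above_degree:
  fixes \<Phi> :: "'a::field pol"
  assumes "homog j \<Phi>" and "j < i"
  shows "pvs.dim (partials wfree i \<Phi>) = 0"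
proof -
  have "\<Phi> (madd m c) = 0" if "m \<in> monoms wfree i" for m c
  proof (rule ccontr)
    assume "\<Phi> (madd m c) \<noteq> 0"
    then have "mdeg m + mdeg c = j"
      using assms(1) by (auto simp: homog_def)
    then show False
      using that assms(2) by (simp add: monoms_def)
  qed
  then have "partials wfree i \<Phi> \<subseteq> {0}"
    by (auto simp: partials_def fun_eq_iff)
  then have "pvs.dim (partials wfree i \<Phi>) \<le> card ({} :: 'a pol set)"
    by (intro pvs.dim_le_card) (auto simp: pvs.span_zero)
  then show ?thesis
    by simp
qed

lemma hilb_symmetric:
  fixes \<Phi> :: "'a::field pol"
  assumes "Q \<inter> base_ring wfree = Ann \<Phi> \<inter> base_ring wfree" "homog j \<Phi>" "wfree \<longrightarrow> no_w \<Phi>" "i \<le> j"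
  shows "hilb (base_ring wfree) Q i = hilb (base_ring wfree) Q (j - i)"
  using hilb_eq_dim_partials[OF assms(1)] dim_partials_symmetric[OF assms(2-4)] by simp

lemma hilb_0:
  fixes \<Phi> :: "'a::field pol"
  assumes "Q \<inter> base_ring wfree = Ann \<Phi> \<inter> base_ring wfree" "\<Phi> \<noteq> 0"
  shows "hilb (base_ring wfree) Q 0 = 1"
  using hilb_eq_dim_partials[OF assms(1)] dim_partials_0[OF assms(2)] by simp

lemma hilb_above_degree:
  fixes \<Phi> :: "'a::field pol"
  assumes "Q \<inter> base_ring wfree = Ann \<Phi> \<inter> base_ring wfree" "homog j \<Phi>" "j < i"
  shows "hilb (base_ring wfree) Q i = 0"
  using hilb_eq_dim_partials[OF assms(1)] dim_partials_above_degree[OF assms(2,3)] by simp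

section \<open>Multiplication by monomials and the ideal \<open>(x,y)R'\<close>\<close>

abbreviation zmono :: "nat \<Rightarrow> mono" where
  "zmono k \<equiv> expv 0 0 0 k"

lemma finite_mle: "finite {a. mle a m}"
proof -
  have "{a. mle a m} \<subseteq> (\<lambda>(a, b, c, d). expv a b c d) ` ({0..m vw} \<times> {0..m vx} \<times> {0..m vy} \<times> {0..m vz})"
  proof
    fix a
    assume "a \<in> {a. mle a m}"
    then have "a vw \<le> m vw" "a vx \<le> m vx" "a vy \<le> m vy" "a vz \<le> m vz"
      by (auto simp: mle_iff)
    then show "a \<in> (\<lambda>(a, b, c, d). expv a b c d) ` ({0..m vw} \<times> {0..m vx} \<times> {0..m vy} \<times> {0..m vz})"
      by (intro image_eqI[of _ _ "(a vw, a vx, a vy, a vz)"]) (auto simp: mono_eq_iff)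
  qed
  then show ?thesis
    by (rule finite_subset) auto
qed

lemma pmul_monom1_apply: "pmul (monom1 e) g m = (if mle e m then g (msub m e) else (0::'a::comm_ring_1))"
proof -
  have "pmul (monom1 e) g m = (\<Sum>a\<in>{a. mle a m}. if a = e then g (msub m e) else 0)"
    unfolding pmul_def by (intro sum.cong refl) (auto simp: monom1_def)
  also have "\<dots> = (if mle e m then g (msub m e) else 0)"
    using finite_mle[of m] by simp
  finally show ?thesis .
qed

lemma pmul_monom1_madd: "pmul (monom1 e) g (madd e n) = (g n :: 'a::comm_ring_1)"
proof -
  have "mle e (madd e n)" "msub (madd e n) e = n"
    by (simp_all add: mle_iff mono_eq_iff)
  then show ?thesis
    by (simp add: pmul_monom1_apply)
qed

lemma supp_pmul_monom1: "supp (pmul (monom1 e) g :: 'a::comm_ring_1 pol) = madd e ` supp g"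
proof
  show "supp (pmul (monom1 e) g) \<subseteq> madd e ` supp g"
  proof
    fix m
    assume "m \<in> supp (pmul (monom1 e) g)"
    then have m: "mle e m" "g (msub m e) \<noteq> 0"
      by (auto simp: supp_def pmul_monom1_apply split: if_splits)
    then have "m = madd e (msub m e)"
      by (auto simp: mono_eq_iff mle_iff)
    then show "m \<in> madd e ` supp g"
      using m(2) by (auto simp: supp_def)
  qed
qed (auto simp: supp_def pmul_monom1_madd)

lemma contract_pmul_monom1:
  fixes g :: "'a::comm_ring_1 pol"
  assumes "finite (supp g)"
  shows "contract (pmul (monom1 e) g) \<Phi> = (\<lambda>c. contract g \<Phi> (madd e c))"
proof
  fix c
  have "inj (madd e)"
    by (auto simp: inj_def mono_eq_iff)
  then have "contract (pmul (monom1 e) g) \<Phi> c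
      = (\<Sum>n\<in>supp g. pmul (monom1 e) g (madd e n) * \<Phi> (madd (madd e n) c))"
    unfolding contract_def supp_pmul_monom1 by (simp add: sum.reindex inj_on_def)
  also have "\<dots> = contract g \<Phi> (madd e c)"
  proof -
    have "madd (madd e n) c = madd n (madd e c)" for n
      by (simp add: mono_eq_iff)
    then show ?thesis
      unfolding contract_def by (simp add: pmul_monom1_madd)
  qed
  finally show "contract (pmul (monom1 e) g) \<Phi> c = contract g \<Phi> (madd e c)" .
qed

lemma pmul_monom1_in_hpart:
  fixes g :: "'a::comm_ring_1 pol"
  assumes g: "g \<in> hpart True i" and e: "e vw = 0"
  shows "pmul (monom1 e) g \<in> hpart True (i + mdeg e)"
proof -
  have "mdeg m = i + mdeg e \<and> m vw = 0" if "pmul (monom1 e) g m \<noteq> 0" for m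
  proof -
    have "m \<in> supp (pmul (monom1 e) g)"
      using that by (simp add: supp_def)
    then obtain n where "n \<in> supp g" "m = madd e n"
      unfolding supp_pmul_monom1 by blast
    then show ?thesis
      using g e by (auto simp: hpart_def homog_def no_w_def supp_def)
  qed
  moreover have "finite (supp (pmul (monom1 e) g))"
    using g by (simp add: supp_pmul_monom1 hpart_def)
  ultimately show ?thesis
    by (simp add: hpart_def homog_def no_w_def)
qed

lemma pmul_monom1_zmono: "pmul (monom1 (zmono k)) g (zmono (i + k)) = (g (zmono i) :: 'a::comm_ring_1)"
proof -
  have "zmono (i + k) = madd (zmono k) (zmono i)"
    by (simp add: mono_eq_iff)
  then show ?thesis
    by (simp add: pmul_monom1_madd)
qed

lemma contract_commute:
  fixes f g :: "'a::comm_ring_1 pol"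
  assumes "finite (supp f)" "finite (supp g)"
  shows "contract f (contract g \<Phi>) = contract g (contract f \<Phi>)"
proof
  fix c
  have "contract f (contract g \<Phi>) c = (\<Sum>m\<in>supp f. \<Sum>n\<in>supp g. f m * (g n * \<Phi> (madd n (madd m c))))"
    by (simp add: contract_def sum_distrib_left)
  also have "\<dots> = (\<Sum>n\<in>supp g. \<Sum>m\<in>supp f. g n * (f m * \<Phi> (madd m (madd n c))))"
    by (subst sum.swap) (simp add: madd_left_commute algebra_simps)
  also have "\<dots> = contract g (contract f \<Phi>) c"
    by (simp add: contract_def sum_distrib_left)
  finally show "contract f (contract g \<Phi>) c = contract g (contract f \<Phi>) c" .
qed

lemma zmono_coeff_xyR': "f \<in> xyR' \<Longrightarrow> f (zmono a) = (0::'a::comm_ring_1)"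
  by (auto simp: xyR'_def pmul_monom1_apply mle_iff)

lemma xyR'I:
  fixes f :: "'a::comm_ring_1 pol"
  assumes f: "f \<in> polys'" "homog a f" and z: "f (zmono a) = 0"
  shows "f \<in> xyR'"
proof -
  let ?x = "expv 0 1 0 0" and ?y = "expv 0 0 1 0"
  define g where "g m = f (madd m ?x)" for m
  define h where "h m = (if m vx = 0 then f (madd m ?y) else 0)" for m
  have fin: "finite (supp f)" and nw: "no_w f"
    using f by (auto simp: polys'_def polys_def)
  have "supp g \<subseteq> (\<lambda>m. msub m ?x) ` supp f" "supp h \<subseteq> (\<lambda>m. msub m ?y) ` supp f"
    by (force simp: supp_def g_def h_def mono_eq_iff split: if_splits)+
  then have "g \<in> polys'" "h \<in> polys'"
    using fin nw finite_subset by (fastforce simp: polys'_def polys_def no_w_def g_def h_def)+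
  moreover have "f m = pmul (monom1 ?x) g m + pmul (monom1 ?y) h m" for m
  proof (cases "m vx = 0 \<and> m vy = 0")
    case True
    have "f m = 0"
    proof (rule ccontr)
      assume "f m \<noteq> 0"
      then have "m vw = 0" "mdeg m = a"
        using nw f(2) by (auto simp: no_w_def homog_def)
      then have "m = zmono a"
        using True by (simp add: mono_eq_iff mdeg_def)
      then show False
        using z \<open>f m \<noteq> 0\<close> by simp
    qed
    then show ?thesis
      using True by (simp add: pmul_monom1_apply mle_iff)
  next
    case False
    then have "m vx \<noteq> 0 \<and> madd (msub m ?x) ?x = m \<or> m vx = 0 \<and> m vy \<noteq> 0 \<and> madd (msub m ?y) ?y = m"
      by (auto simp: mono_eq_iff)
    then show ?thesis
      by (auto simp: pmul_monom1_apply mle_iff g_def h_def)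
  qed
  ultimately show ?thesis
    unfolding xyR'_def by blast
qed

section \<open>Symmetric indicator sums\<close>

lemma downward_closed_interval:
  fixes b :: "nat \<Rightarrow> bool"
  assumes down: "\<And>m. 1 \<le> m \<Longrightarrow> m + 1 \<le> k \<Longrightarrow> b (m + 1) \<Longrightarrow> b m"
    and "l \<le> n" "b n" "1 \<le> l" "n \<le> k"
  shows "b l"
  using assms(2)
proof (induction rule: inc_induct)
  case (step m)
  then show ?case
    using down[of m] assms(4,5) by simp
qed (rule assms(3))

lemma downward_closed_symmetric_middle:
  fixes b :: "nat \<Rightarrow> bool"
  assumes down: "\<And>i. 1 \<le> i \<Longrightarrow> i + 1 \<le> j - 1 \<Longrightarrow> b (i + 1) \<Longrightarrow> b i"
    and sym: "\<And>i. j - a < i \<Longrightarrow> i < a \<Longrightarrow> b i \<longleftrightarrow> b (j - i)"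
    and "a \<le> j" and i1: "j - a < i1" "i1 < a" "b i1"
    and i: "j - a < i" "i < a"
  shows "b i"
proof (cases "i \<le> i1")
  case True
  then show ?thesis
    using downward_closed_interval[where b = b and k = "j - 1" and l = i and n = i1, OF down] i1 i \<open>a \<le> j\<close> by simp
next
  case False
  have "b (j - i1)"
    using sym[OF i1(1,2)] i1(3) by simp
  then have "b (j - i)"
    using downward_closed_interval[where b = b and k = "j - 1" and l = "j - i" and n = "j - i1", OF down] False i i1 \<open>a \<le> j\<close> by simp
  then show ?thesis
    using sym[OF i] by simp
qed

lemma symmetric_indicator_sum_shape:
  fixes j a :: nat and b :: "nat \<Rightarrow> bool"
  defines "X i \<equiv> (if a \<le> i then 1 else 0) + (if b i then 1 else 0 :: nat)"
  assumes a: "2 \<le> a" "a \<le> j"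
    and down: "\<And>i. 1 \<le> i \<Longrightarrow> i + 1 \<le> j - 1 \<Longrightarrow> b (i + 1) \<Longrightarrow> b i"
    and b_at: "a \<le> j - 1 \<Longrightarrow> b (j - a)"
    and sym: "\<And>i. 1 \<le> i \<Longrightarrow> i \<le> j - 1 \<Longrightarrow> X i = X (j - i)"
  shows "(\<forall>i. 1 \<le> i \<and> i \<le> j - 1 \<longrightarrow> X i = Hseq j a i)
       \<or> ((\<forall>i. 1 \<le> i \<and> i \<le> j - 1 \<longrightarrow> X i = 1) \<and> j \<le> 2 * a)"
proof -
  have low: "b i" if "1 \<le> i" "i \<le> j - a" for i
    using downward_closed_interval[where b = b and k = "j - 1" and l = i and n = "j - a", OF down] b_at that a by simp
  have high: "\<not> b i" if "1 \<le> i" "i \<le> j - 1" "a \<le> i" "j - i < a" for i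
  proof -
    have "b (j - i)"
      using low[of "j - i"] that by linarith
    then show ?thesis
      using sym[OF that(1,2)] that by (simp add: X_def split: if_splits)
  qed
  show ?thesis
  proof (cases "2 * a \<le> j \<or> (\<forall>i. j - a < i \<and> i < a \<longrightarrow> \<not> b i)")
    case True
    have "\<not> b i" if "\<not> i \<le> j - a" "i \<le> j - 1" for i
      using high[of i] True that by (cases "a \<le> i") auto
    then have "X i = Hseq j a i" if "1 \<le> i" "i \<le> j - 1" for i
      using low[of i] that a by (cases "i \<le> j - a") (auto simp: X_def Hseq_def)
    then show ?thesis
      by blast
  next
    case False
    then obtain i1 where i1: "j - a < i1" "i1 < a" "b i1" and "j < 2 * a"
      by auto
    have "b i \<longleftrightarrow> b (j - i)" if "j - a < i" "i < a" for i
    proof -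
      have "1 \<le> i" "i \<le> j - 1" "\<not> a \<le> j - i" "\<not> a \<le> i"
        using that a by simp_all
      then show ?thesis
        using sym[of i] unfolding X_def by (cases "b i"; cases "b (j - i)") simp_all
    qed
    then have mid: "b i" if "j - a < i" "i < a" for i
      using downward_closed_symmetric_middle[where b = b and j = j and a = a, OF down _ a(2) i1 that] by blast
    have "X i = 1" if "1 \<le> i" "i \<le> j - 1" for i
      using low[of i] mid[of i] high[of i] that \<open>j < 2 * a\<close>
      by (cases "i \<le> j - a"; cases "i < a") (simp_all add: X_def)
    then show ?thesis
      using \<open>j < 2 * a\<close> by simp
  qed
qed

section \<open>The dual generator \<open>F = G + W Z\<^sup>[\<^sup>j\<^sup>-\<^sup>1\<^sup>]\<close>\<close>

definition wfree_part :: "('a::zero) pol \<Rightarrow> 'a pol" where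
  "wfree_part h = (\<lambda>c. if c vw = 0 then h c else 0)"

lemma wfree_part_add: "wfree_part (f + g) = wfree_part f + wfree_part (g :: 'a::monoid_add pol)"
  by (auto simp: wfree_part_def fun_eq_iff)

lemma wfree_part_scale: "wfree_part (pscale c f) = pscale c (wfree_part (f :: 'a::field pol))"
  by (auto simp: wfree_part_def fun_eq_iff)

lemma wfree_part_no_w: "no_w h \<Longrightarrow> wfree_part h = h"
  by (auto simp: wfree_part_def no_w_def fun_eq_iff)

lemma no_w_contract_on:
  assumes "no_w \<Phi>"
  shows "no_w (contract_on M \<Phi> g)"
  unfolding no_w_def
proof (intro allI impI)
  fix c
  assume nonzero: "contract_on M \<Phi> g c \<noteq> 0"
  show "c vw = 0"
  proof (rule ccontr)
    assume "c vw \<noteq> 0"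
    then have "\<Phi> (madd m c) = 0" for m
      using assms by (auto simp: no_w_def)
    then show False
      using nonzero by (simp add: contract_on_def)
  qed
qed

lemma madd_eq_WZ_iff:
  assumes "mdeg m = i" "1 \<le> i" "i \<le> j - 1"
  shows "madd m c = expv 1 0 0 (j - 1) \<longleftrightarrow>
     m = zmono i \<and> c = expv 1 0 0 (j - 1 - i) \<or> m = expv 1 0 0 (i - 1) \<and> c = zmono (j - i)"
  using assms unfolding mono_eq_iff[of "madd m c"] mono_eq_iff[of m] mono_eq_iff[of c]
  by (simp add: mdeg_def) arith

locale dual_generator =
  fixes G :: "'a::field pol" and j :: nat
  assumes j_pos: "1 \<le> j" and homog_G: "homog j G" and no_w_G: "no_w G"
begin

definition F :: "'a pol" where
  "F = (\<lambda>m. G m + monom1 (expv 1 0 0 (j - 1)) m)"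

definition J' :: "'a pol set" where
  "J' = Ann G \<inter> polys'"

definition J'_escapes_xy :: "nat \<Rightarrow> bool" where
  "J'_escapes_xy i \<longleftrightarrow> (\<exists>g\<in>hpart True i. contract g G = 0 \<and> g (zmono i) \<noteq> 0)"

text \<open>By \<open>xyR'I\<close>, \<open>g (zmono i) = 0\<close> means \<open>g \<in> (x,y)R'\<close>; so this says
  \<open>Z\<^sup>[\<^sup>j\<^sup>-\<^sup>i\<^sup>] \<in> ((x,y)R')\<^sub>i \<circ> G\<close>.\<close>

definition zpow_reachable :: "nat \<Rightarrow> bool" where
  "zpow_reachable i \<longleftrightarrow> (\<exists>g\<in>hpart True i. g (zmono i) = 0 \<and> contract g G = monom1 (zmono (j - i)))"

lemma homog_F: "homog j F"
  using homog_G j_pos by (auto simp: homog_def F_def monom1_def)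

lemma contract_on_F_wfree:
  assumes "1 \<le> i" "i \<le> j - 1"
  shows "contract_on (monoms True i) F g
       = contract_on (monoms True i) G g + pscale (g (zmono i)) (monom1 (expv 1 0 0 (j - 1 - i)))"
proof
  fix c
  have hit: "madd m c = expv 1 0 0 (j - 1) \<longleftrightarrow> m = zmono i \<and> c = expv 1 0 0 (j - 1 - i)"
    if "m \<in> monoms True i" for m
  proof -
    have "mdeg m = i" "m vw = 0"
      using that by (simp_all add: monoms_def)
    then have "m \<noteq> expv 1 0 0 (i - 1)"
      by (metis expv_apply(1) zero_neq_one)
    then show ?thesis
      using madd_eq_WZ_iff[OF \<open>mdeg m = i\<close> assms, of c] by blast
  qed
  have "(\<Sum>m\<in>monoms True i. g m * monom1 (expv 1 0 0 (j - 1)) (madd m c))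
      = (\<Sum>m\<in>monoms True i. if m = zmono i then g m * monom1 (expv 1 0 0 (j - 1 - i)) c else 0)"
  proof (intro sum.cong refl)
    fix m
    assume "m \<in> monoms True i"
    then show "g m * monom1 (expv 1 0 0 (j - 1)) (madd m c)
        = (if m = zmono i then g m * monom1 (expv 1 0 0 (j - 1 - i)) c else 0)"
      using hit[of m] by (auto simp: monom1_def)
  qed
  also have "\<dots> = g (zmono i) * monom1 (expv 1 0 0 (j - 1 - i)) c"
    using finite_monoms[of True i] by (simp add: monoms_def)
  finally show "contract_on (monoms True i) F g c
      = (contract_on (monoms True i) G g + pscale (g (zmono i)) (monom1 (expv 1 0 0 (j - 1 - i)))) c"
    by (simp add: contract_on_def F_def distrib_left sum.distrib)
qed

lemma partial_F_w_monomial: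
  assumes "1 \<le> i" "i \<le> j - 1" and m: "m \<in> monoms False i" "m vw \<noteq> 0"
  shows "(\<lambda>c. F (madd m c)) = (if m = expv 1 0 0 (i - 1) then monom1 (zmono (j - i)) else 0)"
proof
  fix c
  have "G (madd m c) = 0"
    using no_w_G m(2) by (auto simp: no_w_def)
  moreover have "mdeg m = i" "m \<noteq> zmono i"
    using m by (simp add: monoms_def, metis expv_apply(1))
  then have "madd m c = expv 1 0 0 (j - 1) \<longleftrightarrow> m = expv 1 0 0 (i - 1) \<and> c = zmono (j - i)"
    using madd_eq_WZ_iff[OF _ assms(1,2), of m c] by blast
  ultimately show "F (madd m c) = (if m = expv 1 0 0 (i - 1) then monom1 (zmono (j - i)) else 0) c"
    by (auto simp: F_def monom1_def)
qed

lemma span_partials_F: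
  assumes "1 \<le> i" "i \<le> j - 1"
  shows "pvs.span (partials False i F) = pvs.span (insert (monom1 (zmono (j - i))) (partials True i F))"
proof -
  let ?Z = "monom1 (zmono (j - i)) :: 'a pol" and ?w = "expv 1 0 0 (i - 1)"
  note w_partial = partial_F_w_monomial[OF assms]
  have sub: "partials False i F \<subseteq> insert 0 (insert ?Z (partials True i F))"
  proof
    fix r
    assume "r \<in> partials False i F"
    then obtain m where m: "m \<in> monoms False i" "r = (\<lambda>c. F (madd m c))"
      by (auto simp: partials_def)
    show "r \<in> insert 0 (insert ?Z (partials True i F))"
    proof (cases "m vw = 0")
      case True
      then show ?thesis
        using m by (auto simp: partials_def monoms_def)
    next
      case False
      then show ?thesis
        using w_partial[OF m(1) False] m(2) by simp
    qed
  qed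
  have sup: "insert ?Z (partials True i F) \<subseteq> partials False i F"
  proof -
    have "?w \<in> monoms False i"
      using assms by (simp add: monoms_def)
    moreover have "?Z = (\<lambda>c. F (madd ?w c))"
      using w_partial[of ?w] \<open>?w \<in> monoms False i\<close> by simp
    moreover have "monoms True i \<subseteq> monoms False i"
      by (auto simp: monoms_def)
    ultimately show ?thesis
      by (auto simp: partials_def)
  qed
  have "pvs.span (partials False i F) \<subseteq> pvs.span (insert 0 (insert ?Z (partials True i F)))"
    by (rule pvs.span_mono[OF sub])
  then have "pvs.span (partials False i F) \<subseteq> pvs.span (insert ?Z (partials True i F))"
    by (simp only: pvs.span_insert_0)
  moreover have "pvs.span (insert ?Z (partials True i F)) \<subseteq> pvs.span (partials False i F)"
    by (rule pvs.span_mono[OF sup])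
  ultimately show ?thesis
    by (rule subset_antisym)
qed

lemma span_partials_F_wfree:
  assumes "1 \<le> i" "i \<le> j - 1"
  shows "pvs.span (partials True i F)
       = (\<lambda>g. contract_on (monoms True i) G g + pscale (g (zmono i)) (monom1 (expv 1 0 0 (j - 1 - i))))
           ` hpart True i"
  unfolding contract_on_image[symmetric] by (intro image_cong refl contract_on_F_wfree[OF assms])

lemma dim_zcoeff_image_of_kernel:
  assumes "E \<noteq> 0"
  shows "pvs.dim ((\<lambda>g. pscale (g (zmono i)) E) ` {g \<in> hpart True i. contract_on (monoms True i) G g = 0})
       = (if J'_escapes_xy i then 1 else 0)"
proof -
  let ?K = "{g \<in> hpart True i. contract_on (monoms True i) G g = 0}"
  have K: "pvs.subspace ?K"
    using subspace_hpart unfolding pvs.subspace_def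
    by (auto simp: contract_on_add contract_on_scale) (simp add: contract_on_def zero_fun_def)
  have "pvs.dim ((\<lambda>g. pscale (g (zmono i)) E) ` ?K) = (if \<exists>g\<in>?K. g (zmono i) \<noteq> 0 then 1 else 0)"
    using assms by (intro pvs.dim_image_functional_scale[OF K]) simp_all
  moreover have "(\<exists>g\<in>?K. g (zmono i) \<noteq> 0) \<longleftrightarrow> J'_escapes_xy i"
    unfolding J'_escapes_xy_def by (simp add: contract_eq_contract_on Bex_def cong: conj_cong)
  ultimately show ?thesis
    by simp
qed

lemma dim_partials_F_wfree:
  assumes "1 \<le> i" "i \<le> j - 1"
  shows "pvs.dim (partials True i F) = pvs.dim (partials True i G) + (if J'_escapes_xy i then 1 else 0)"
proof -
  let ?L = "contract_on (monoms True i) G" and ?T = "pvs.span (partials True i F)"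
  define E :: "'a pol" where "E = monom1 (expv 1 0 0 (j - 1 - i))"
  note T = span_partials_F_wfree[OF assms, folded E_def]
  have "E \<noteq> 0" "wfree_part E = 0"
    by (auto simp: E_def wfree_part_def monom1_def fun_eq_iff)
  then have wfree_part_T: "wfree_part (?L g + pscale s E) = ?L g" for g s
    by (simp add: wfree_part_add wfree_part_scale wfree_part_no_w no_w_contract_on[OF no_w_G])
  have "finite (partials True i F)"
    by (simp add: partials_def finite_monoms)
  then have rank: "pvs.dim ?T = pvs.dim {t \<in> ?T. wfree_part t = 0} + pvs.dim (wfree_part ` ?T)"
    by (rule pvs.dim_eq_dim_kernel_plus_dim_image[OF wfree_part_add wfree_part_scale pvs.subspace_span
          order_refl])
  have "wfree_part ` ?T = ?L ` hpart True i"
    unfolding T image_image wfree_part_T ..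
  then have image: "wfree_part ` ?T = pvs.span (partials True i G)"
    by (simp add: contract_on_image)
  have "{t \<in> ?T. wfree_part t = 0} = (\<lambda>g. ?L g + pscale (g (zmono i)) E)
      ` {g \<in> hpart True i. wfree_part (?L g + pscale (g (zmono i)) E) = 0}"
    unfolding T by blast
  also have "\<dots> = (\<lambda>g. pscale (g (zmono i)) E) ` {g \<in> hpart True i. ?L g = 0}"
    unfolding wfree_part_T by (intro image_cong refl) simp
  finally have kernel: "{t \<in> ?T. wfree_part t = 0} = (\<lambda>g. pscale (g (zmono i)) E) ` {g \<in> hpart True i. ?L g = 0}" .
  show ?thesis
    using rank[unfolded image kernel dim_zcoeff_image_of_kernel[OF \<open>E \<noteq> 0\<close>] pvs.dim_span] by linarith
qed

lemma zpow_in_span_partials_F_wfree_iff: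
  assumes "1 \<le> i" "i \<le> j - 1"
  shows "monom1 (zmono (j - i)) \<in> pvs.span (partials True i F) \<longleftrightarrow> zpow_reachable i"
proof -
  let ?L = "contract_on (monoms True i) G" and ?E = "monom1 (expv 1 0 0 (j - 1 - i)) :: 'a pol"
    and ?Z = "monom1 (zmono (j - i)) :: 'a pol"
  have key: "?Z = ?L g + pscale (g (zmono i)) ?E \<longleftrightarrow> g (zmono i) = 0 \<and> ?L g = ?Z" for g
  proof
    assume eq: "?Z = ?L g + pscale (g (zmono i)) ?E"
    have "?L g (expv 1 0 0 (j - 1 - i)) = 0"
      using no_w_contract_on[OF no_w_G, of "monoms True i" g] expv_apply(1)[of 1 0 0 "j - 1 - i"]
      unfolding no_w_def by fastforce
    then have "g (zmono i) = (?L g + pscale (g (zmono i)) ?E) (expv 1 0 0 (j - 1 - i))"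
      by (simp add: monom1_def)
    also have "\<dots> = 0"
      unfolding eq[symmetric] by (simp add: monom1_def mono_eq_iff)
    finally show "g (zmono i) = 0 \<and> ?L g = ?Z"
      using eq by (simp add: pscale_def zero_fun_def[symmetric])
  qed (simp add: pscale_def zero_fun_def[symmetric])
  show ?thesis
    unfolding span_partials_F_wfree[OF assms] image_iff key zpow_reachable_def
    by (auto simp: contract_eq_contract_on)
qed

lemma hilb_F_eq:
  assumes "1 \<le> i" "i \<le> j - 1"
  shows "hilb polys (Ann F) i = hilb polys' J' i
       + (if J'_escapes_xy i then 1 else 0) + (if zpow_reachable i then 0 else 1)"
proof -
  have hilb_J': "hilb polys' J' i = pvs.dim (partials True i G)"
    using hilb_eq_dim_partials[of J' True G i] by (simp add: base_ring_def J'_def)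
  have "finite (partials True i F)"
    by (simp add: partials_def finite_monoms)
  have "hilb polys (Ann F) i = pvs.dim (partials False i F)"
    using hilb_eq_dim_partials[of "Ann F" False F i] by (simp add: base_ring_def)
  also have "\<dots> = pvs.dim (insert (monom1 (zmono (j - i))) (partials True i F))"
    by (subst (1 2) pvs.dim_span[symmetric]) (simp only: span_partials_F[OF assms])
  also have "\<dots> = pvs.dim (partials True i F)
      + (if monom1 (zmono (j - i)) \<in> pvs.span (partials True i F) then 0 else 1)"
    by (simp add: pvs.dim_insert_finite_span[OF pvs.span_superset \<open>finite (partials True i F)\<close>])
  finally show ?thesis
    unfolding hilb_J' dim_partials_F_wfree[OF assms] zpow_in_span_partials_F_wfree_iff[OF assms]
    by simp
qed


lemma J'_escapes_xy_iff: "J'_escapes_xy a \<longleftrightarrow> (\<exists>f\<in>J'. homog a f \<and> f \<notin> xyR')"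
proof
  assume "J'_escapes_xy a"
  then obtain g where g: "g \<in> hpart True a" "contract g G = 0" "g (zmono a) \<noteq> 0"
    by (auto simp: J'_escapes_xy_def)
  then have "g \<in> J'" "homog a g"
    by (auto simp: J'_def Ann_def hpart_def polys'_def polys_def zero_fun_def)
  moreover have "g \<notin> xyR'"
    using zmono_coeff_xyR' g(3) by blast
  ultimately show "\<exists>f\<in>J'. homog a f \<and> f \<notin> xyR'"
    by blast
next
  assume "\<exists>f\<in>J'. homog a f \<and> f \<notin> xyR'"
  then obtain f where f: "f \<in> J'" "homog a f" "f \<notin> xyR'"
    by blast
  then have "f \<in> hpart True a" "contract f G = 0" "f (zmono a) \<noteq> 0"
    using xyR'I[of f a] by (auto simp: J'_def Ann_def hpart_def polys'_def polys_def zero_fun_def)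
  then show "J'_escapes_xy a"
    by (auto simp: J'_escapes_xy_def)
qed

lemma J'_escapes_xy_mono:
  assumes "J'_escapes_xy a" "a \<le> b"
  shows "J'_escapes_xy b"
proof -
  obtain g where g: "g \<in> hpart True a" "contract g G = 0" "g (zmono a) \<noteq> 0"
    using assms(1) by (auto simp: J'_escapes_xy_def)
  define g' where "g' = pmul (monom1 (zmono (b - a))) g"
  have "g' \<in> hpart True b"
    using pmul_monom1_in_hpart[OF g(1), of "zmono (b - a)"] assms(2) by (simp add: g'_def)
  moreover have "contract g' G = 0"
    using g(1,2) by (simp add: g'_def contract_pmul_monom1 hpart_def zero_fun_def)
  moreover have "g' (zmono b) \<noteq> 0"
    using pmul_monom1_zmono[of "b - a" g a] g(3) assms(2) by (simp add: g'_def)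
  ultimately show ?thesis
    by (auto simp: J'_escapes_xy_def)
qed

lemma zpow_reachable_Suc:
  assumes "i + 1 \<le> j" "zpow_reachable i"
  shows "zpow_reachable (i + 1)"
proof -
  obtain g where g: "g \<in> hpart True i" "g (zmono i) = 0" "contract g G = monom1 (zmono (j - i))"
    using assms(2) by (auto simp: zpow_reachable_def)
  define g' where "g' = pmul (monom1 (zmono 1)) g"
  have "g' \<in> hpart True (i + 1)"
    using pmul_monom1_in_hpart[OF g(1), of "zmono 1"] by (simp add: g'_def)
  moreover have "g' (zmono (i + 1)) = 0"
    using pmul_monom1_zmono[of 1 g i] g(2) by (simp add: g'_def)
  moreover have "contract g' G = monom1 (zmono (j - (i + 1)))"
  proof
    fix c
    have "finite (supp g)"
      using g(1) by (simp add: hpart_def)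
    moreover have "madd (zmono 1) c = zmono (j - i) \<longleftrightarrow> c = zmono (j - (i + 1))"
      using assms(1) by (auto simp: mono_eq_iff)
    ultimately show "contract g' G c = monom1 (zmono (j - (i + 1))) c"
      unfolding g'_def contract_pmul_monom1[OF \<open>finite (supp g)\<close>] g(3) by (simp add: monom1_def)
  qed
  ultimately show ?thesis
    unfolding zpow_reachable_def by blast
qed

end

locale nondegenerate_dual_generator = dual_generator +
  assumes no_quadric: "\<And>q. q \<in> Ann F \<inter> polys' \<Longrightarrow> homog 2 q \<Longrightarrow> q = 0"
begin

definition \<alpha> :: nat where
  "\<alpha> = alpha_inv J'"

lemma G_has_monomial_besides_zpow: "\<exists>m. G m \<noteq> 0 \<and> m \<noteq> zmono j"
proof (rule ccontr)
  assume "\<not> (\<exists>m. G m \<noteq> 0 \<and> m \<noteq> zmono j)"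
  then have G_zpow: "G m = 0" if "m \<noteq> zmono j" for m
    using that by blast
  let ?x2 = "expv 0 2 0 0"
  have "contract (monom1 ?x2) F = (\<lambda>_. 0)"
  proof
    fix c
    have "madd ?x2 c \<noteq> zmono j" "madd ?x2 c \<noteq> expv 1 0 0 (j - 1)"
      by (auto simp: mono_eq_iff)
    then show "contract (monom1 ?x2) F c = 0"
      using G_zpow[of "madd ?x2 c"] unfolding contract_monom1 F_def by (simp add: monom1_def)
  qed
  moreover have "finite (supp (monom1 ?x2 :: 'a pol))"
    by simp
  moreover have "no_w (monom1 ?x2 :: 'a pol)" "homog 2 (monom1 ?x2 :: 'a pol)"
    by (auto simp: no_w_def homog_def monom1_def)
  ultimately have "monom1 ?x2 = (0 :: 'a pol)"
    using no_quadric by (simp add: Ann_def polys'_def polys_def)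
  then show False
    by (metis monom1_def one_neq_zero zero_fun_def)
qed

lemma J'_escapes_xy_top: "J'_escapes_xy j"
proof -
  obtain m1 where m1: "G m1 \<noteq> 0" "m1 \<noteq> zmono j"
    using G_has_monomial_besides_zpow by blast
  have zM: "zmono j \<in> monoms True j" and m1M: "m1 \<in> monoms True j"
    using m1(1) homog_G no_w_G by (auto simp: monoms_def homog_def no_w_def)
  define r where "r = G (zmono j) / G m1"
  define g :: "'a pol" where "g = monom1 (zmono j) + pscale (- r) (monom1 m1)"
  have g: "g \<in> hpart True j"
    unfolding g_def
    by (intro pvs.subspace_add[OF subspace_hpart] pvs.subspace_scale[OF subspace_hpart] monom1_in_hpart zM m1M)
  have "contract_on (monoms True j) G g c = 0" for c
  proof -
    have "contract_on (monoms True j) G g c = G (madd (zmono j) c) - r * G (madd m1 c)"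
      unfolding g_def contract_on_add contract_on_scale contract_on_monom1[OF zM finite_monoms]
        contract_on_monom1[OF m1M finite_monoms] by simp
    also have "\<dots> = 0"
    proof (cases "c = (\<lambda>_. 0)")
      case True
      then show ?thesis
        using m1(1) by (simp add: r_def)
    next
      case False
      then have "mdeg (madd (zmono j) c) \<noteq> j" "mdeg (madd m1 c) \<noteq> j"
        using m1M by (auto simp: monoms_def mdeg_eq_0_iff)
      then have "G (madd (zmono j) c) = 0" "G (madd m1 c) = 0"
        using homog_G unfolding homog_def by blast+
      then show ?thesis
        by simp
    qed
    finally show ?thesis .
  qed
  then have "contract g G = 0"
    using contract_eq_contract_on[OF g] by (simp add: fun_eq_iff)
  moreover have "g (zmono j) \<noteq> 0"
    using m1(2) by (simp add: g_def monom1_def)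
  ultimately show ?thesis
    using g by (auto simp: J'_escapes_xy_def)
qed

lemma \<alpha>_eq_Least: "\<alpha> = (LEAST a. 1 \<le> a \<and> J'_escapes_xy a)"
  by (simp add: \<alpha>_def alpha_inv_def J'_escapes_xy_iff)

lemma \<alpha>_le_j: "\<alpha> \<le> j"
  unfolding \<alpha>_eq_Least by (rule Least_le) (use j_pos J'_escapes_xy_top in simp)

lemma J'_escapes_xy_\<alpha>: "1 \<le> \<alpha>" "J'_escapes_xy \<alpha>"
proof -
  have "1 \<le> \<alpha> \<and> J'_escapes_xy \<alpha>"
    unfolding \<alpha>_eq_Least by (rule LeastI[of _ j]) (use j_pos J'_escapes_xy_top in simp)
  then show "1 \<le> \<alpha>" "J'_escapes_xy \<alpha>"
    by simp_all
qed

lemma J'_escapes_xy_iff_\<alpha>_le: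
  assumes "1 \<le> i"
  shows "J'_escapes_xy i \<longleftrightarrow> \<alpha> \<le> i"
proof
  assume "J'_escapes_xy i"
  then show "\<alpha> \<le> i"
    unfolding \<alpha>_eq_Least using assms by (simp add: Least_le)
next
  show "\<alpha> \<le> i \<Longrightarrow> J'_escapes_xy i"
    using J'_escapes_xy_mono J'_escapes_xy_\<alpha>(2) by blast
qed

text \<open>If \<open>\<alpha> = 1\<close>, a linear \<open>f \<in> J'\<close> with \<open>f(z) \<noteq> 0\<close> gives the quadric \<open>x f\<close> in \<open>Ann F \<inter> R'\<close>:
  \<open>x f\<close> kills \<open>G\<close> and cannot reach \<open>W Z\<^sup>[\<^sup>j\<^sup>-\<^sup>1\<^sup>]\<close>.\<close>

lemma two_le_\<alpha>: "2 \<le> \<alpha>"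
proof (rule ccontr)
  assume "\<not> 2 \<le> \<alpha>"
  then have "\<alpha> = 1"
    using J'_escapes_xy_\<alpha>(1) by linarith
  then have "J'_escapes_xy 1"
    using J'_escapes_xy_\<alpha>(2) by simp
  then obtain f where f: "f \<in> hpart True 1" "contract f G = 0" "f (zmono 1) \<noteq> 0"
    by (auto simp: J'_escapes_xy_def)
  let ?x = "expv 0 1 0 0"
  define q where "q = pmul (monom1 ?x) f"
  have fin: "finite (supp f)"
    using f(1) by (simp add: hpart_def)
  have q: "q \<in> hpart True 2"
    using pmul_monom1_in_hpart[OF f(1), of ?x] by (simp add: q_def numeral_2_eq_2)
  have "contract q F = (\<lambda>_. 0)"
  proof
    fix c
    have "contract f F = (\<lambda>c. contract f G c + contract f (monom1 (expv 1 0 0 (j - 1))) c)"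
      by (simp add: F_def contract_def fun_eq_iff distrib_left sum.distrib)
    moreover have "contract f (monom1 (expv 1 0 0 (j - 1))) (madd ?x c) = 0"
      unfolding contract_def by (intro sum.neutral ballI) (simp add: monom1_def mono_eq_iff)
    ultimately show "contract q F c = 0"
      using f(2) by (simp add: q_def contract_pmul_monom1[OF fin])
  qed
  then have "q = 0"
    using no_quadric q by (simp add: Ann_def hpart_def polys'_def polys_def)
  moreover have "q (madd ?x (zmono 1)) = f (zmono 1)"
    by (simp add: q_def pmul_monom1_madd)
  ultimately show False
    using f(3) by simp
qed

lemma not_zpow_reachable_at_\<alpha>: "\<not> zpow_reachable (j - \<alpha>)"
proof
  assume "zpow_reachable (j - \<alpha>)"
  then obtain g where g: "g \<in> hpart True (j - \<alpha>)" "contract g G = monom1 (zmono \<alpha>)"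
    using \<alpha>_le_j by (auto simp: zpow_reachable_def)
  obtain f where f: "f \<in> hpart True \<alpha>" "contract f G = 0" "f (zmono \<alpha>) \<noteq> 0"
    using J'_escapes_xy_\<alpha>(2) by (auto simp: J'_escapes_xy_def)
  have "finite (supp f)" "finite (supp g)"
    using f(1) g(1) by (simp_all add: hpart_def)
  then have "contract f (monom1 (zmono \<alpha>)) = contract g (contract f G)"
    using contract_commute g(2) by metis
  also have "\<dots> = 0"
    unfolding f(2) by (simp add: contract_def zero_fun_def)
  finally have "contract f (monom1 (zmono \<alpha>)) (\<lambda>_. 0) = 0"
    by simp
  moreover have "contract f (monom1 (zmono \<alpha>)) (\<lambda>_. 0) = (\<Sum>m\<in>supp f. if m = zmono \<alpha> then f m else 0)"
    unfolding contract_def by (intro sum.cong refl) (simp add: monom1_def)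
  moreover have "\<dots> = f (zmono \<alpha>)"
    using \<open>finite (supp f)\<close> f(3) by (simp add: supp_def)
  ultimately show False
    using f(3) by simp
qed


lemma hilb_F_symmetric: "i \<le> j \<Longrightarrow> hilb polys (Ann F) i = hilb polys (Ann F) (j - i)"
  using hilb_symmetric[of "Ann F" False F j i] homog_F by (simp add: base_ring_def)

lemma hilb_J'_symmetric: "i \<le> j \<Longrightarrow> hilb polys' J' i = hilb polys' J' (j - i)"
  using hilb_symmetric[of J' True G j i] homog_G no_w_G by (auto simp: base_ring_def J'_def)

lemma hilb_F_eq_outside:
  assumes "i = 0 \<or> j \<le> i"
  shows "hilb polys (Ann F) i = hilb polys' J' i"
proof -
  have "G (expv 1 0 0 (j - 1)) = 0"
    using no_w_G expv_apply(1)[of 1 0 0 "j - 1"] unfolding no_w_def by fastforce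
  then have "F (expv 1 0 0 (j - 1)) \<noteq> 0"
    by (simp add: F_def monom1_def)
  then have F0: "hilb polys (Ann F) 0 = 1"
    using hilb_0[of "Ann F" False F] by (force simp: base_ring_def)
  have "G \<noteq> 0"
    using G_has_monomial_besides_zpow by auto
  then have G0: "hilb polys' J' 0 = 1"
    using hilb_0[of J' True G] by (simp add: base_ring_def J'_def)
  consider "i = 0" | "i = j" | "j < i"
    using assms by linarith
  then show ?thesis
  proof cases
    case 1
    then show ?thesis
      using F0 G0 by simp
  next
    case 2
    then show ?thesis
      using F0 G0 hilb_F_symmetric[of j] hilb_J'_symmetric[of j] by simp
  next
    case 3
    then show ?thesis
      using hilb_above_degree[of "Ann F" False F j i] hilb_above_degree[of J' True G j i] homog_F homog_G
      by (simp add: base_ring_def J'_def)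
  qed
qed

definition excess :: "nat \<Rightarrow> nat" where
  "excess i = (if \<alpha> \<le> i then 1 else 0) + (if \<not> zpow_reachable i then 1 else 0)"

lemma hilb_F_eq_excess:
  "1 \<le> i \<Longrightarrow> i \<le> j - 1 \<Longrightarrow> hilb polys (Ann F) i = hilb polys' J' i + excess i"
  using hilb_F_eq J'_escapes_xy_iff_\<alpha>_le by (simp add: excess_def)

lemma excess_shape:
  "(\<forall>i. 1 \<le> i \<and> i \<le> j - 1 \<longrightarrow> excess i = Hseq j \<alpha> i)
   \<or> ((\<forall>i. 1 \<le> i \<and> i \<le> j - 1 \<longrightarrow> excess i = 1) \<and> j \<le> 2 * \<alpha>)"
proof -
  have down: "\<not> zpow_reachable i" if "1 \<le> i" "i + 1 \<le> j - 1" "\<not> zpow_reachable (i + 1)" for i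
  proof -
    have "i + 1 \<le> j"
      using that(2) by linarith
    then show ?thesis
      using that(3) zpow_reachable_Suc by blast
  qed
  have at_\<alpha>: "\<alpha> \<le> j - 1 \<Longrightarrow> \<not> zpow_reachable (j - \<alpha>)"
    by (rule not_zpow_reachable_at_\<alpha>)
  have symmetric: "excess i = excess (j - i)" if "1 \<le> i" "i \<le> j - 1" for i
    using hilb_F_eq_excess[OF that] hilb_F_eq_excess[of "j - i"] hilb_F_symmetric[of i] hilb_J'_symmetric[of i]
      that by simp
  show ?thesis
    using symmetric_indicator_sum_shape[OF two_le_\<alpha> \<alpha>_le_j down at_\<alpha> symmetric[unfolded excess_def]]
    unfolding excess_def .
qed

theorem hilb_F_shape:
  "(2 \<le> \<alpha> \<and> \<alpha> \<le> j \<and> hilb polys (Ann F) = (\<lambda>i. hilb polys' J' i + Hseq j \<alpha> i))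
   \<or> (hilb polys (Ann F) = (\<lambda>i. hilb polys' J' i + H0seq j i) \<and> j \<le> 2 * \<alpha>)"
proof -
  have hilb_F: "hilb polys (Ann F) = (\<lambda>i. hilb polys' J' i + H i)"
    if inside: "\<forall>i. 1 \<le> i \<and> i \<le> j - 1 \<longrightarrow> excess i = H i"
      and outside: "\<forall>i. \<not> (1 \<le> i \<and> i \<le> j - 1) \<longrightarrow> H i = 0" for H
  proof
    fix i
    show "hilb polys (Ann F) i = hilb polys' J' i + H i"
      using hilb_F_eq_excess[of i] hilb_F_eq_outside[of i] inside outside
      by (cases "1 \<le> i \<and> i \<le> j - 1") auto
  qed
  have Hseq_outside: "\<forall>i. \<not> (1 \<le> i \<and> i \<le> j - 1) \<longrightarrow> Hseq j \<alpha> i = 0"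
    and H0seq_outside: "\<forall>i. \<not> (1 \<le> i \<and> i \<le> j - 1) \<longrightarrow> H0seq j i = 0"
    by (auto simp: Hseq_def H0seq_def)
  from excess_shape show ?thesis
  proof
    assume "\<forall>i. 1 \<le> i \<and> i \<le> j - 1 \<longrightarrow> excess i = Hseq j \<alpha> i"
    then show ?thesis
      using hilb_F[OF _ Hseq_outside] two_le_\<alpha> \<alpha>_le_j by blast
  next
    assume H0: "(\<forall>i. 1 \<le> i \<and> i \<le> j - 1 \<longrightarrow> excess i = 1) \<and> j \<le> 2 * \<alpha>"
    then have "\<forall>i. 1 \<le> i \<and> i \<le> j - 1 \<longrightarrow> excess i = H0seq j i"
      by (auto simp: H0seq_def)
    then show ?thesis
      using hilb_F[OF _ H0seq_outside] H0 by blast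
  qed
qed

end

theorem lemma3p19:
  fixes G :: "('k::alg_closed_field) pol" and j :: nat
  assumes j: "1 \<le> j"
    and G: "homog j G" "no_w G"
    and I2: "{f \<in> Ann (\<lambda>m. G m + monom1 (expv 1 0 0 (j - 1)) m). homog 2 f}
             = {\<lambda>m. a * monom1 (expv 2 0 0 0) m + b * monom1 (expv 1 1 0 0) m
                      + c * monom1 (expv 1 0 1 0) m | a b c. True}"
  shows "let F = (\<lambda>m. G m + monom1 (expv 1 0 0 (j - 1)) m);
             I = Ann F; J' = Ann G \<inter> polys'; \<alpha> = alpha_inv J'
         in (2 \<le> \<alpha> \<and> \<alpha> \<le> j \<and> hilb polys I = (\<lambda>i. hilb polys' J' i + Hseq j \<alpha> i))
            \<or> (hilb polys I = (\<lambda>i. hilb polys' J' i + H0seq j i) \<and> j \<le> 2 * \<alpha>)"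
proof -
  interpret dual_generator G j
    using j G by unfold_locales
  have "q = 0" if q: "q \<in> Ann F \<inter> polys'" "homog 2 q" for q
  proof
    fix m
    obtain a b c where "q = (\<lambda>m. a * monom1 (expv 2 0 0 0) m + b * monom1 (expv 1 1 0 0) m
        + c * monom1 (expv 1 0 1 0) m)"
      using I2 q unfolding F_def by blast
    then have "q m = 0" if "m vw = 0"
      using that by (auto simp: monom1_def)
    moreover have "q m = 0" if "m vw \<noteq> 0"
      using q(1) that by (auto simp: polys'_def no_w_def)
    ultimately show "q m = 0 m"
      by (cases "m vw = 0") simp_all
  qed
  then interpret nondegenerate_dual_generator G j
    by unfold_locales
  show ?thesis
    using hilb_F_shape unfolding Let_def F_def J'_def \<alpha>_def .
qed

end
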